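(* Let $X,Y$ be smooth paracompact Hausdorff manifolds, $I=(0,1]$, and let $(u_\varepsilon)_{\varepsilon\in I}\in \mathcal{C}^\infty(X,Y)^I$. The following conditions are equivalent: (i) $(u_\varepsilon)_\varepsilon$ is c-bounded. (ii) $(f\circ u_\varepsilon)_\varepsilon$ is c-bounded for all $f\in\mathcal{C}^\infty(Y)$. (iii) $(f\circ u_\varepsilon)_\varepsilon$ is moderate of order zero for all $f\in\mathcal{C}^\infty(Y)$, i.e., for every $f\in\mathcal{C}^\infty(Y)$ and every compact $K\subseteq X$ there is $N\in\mathbb{N}$ with $\sup_{p\in K}|f\circ u_\varepsilon(p)|=O(\varepsilon^{-N})$ as $\varepsilon\to0$. (iv) $(u_\varepsilon(x_\varepsilon))_\varepsilon\in Y_c$ for all $(x_\varepsilon)_\varepsilon\in X_c$.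
   Context: Smooth scalar functions are real- or complex-valued. A net $(v_\varepsilon)_\varepsilon$ of maps $X\to M$ ($M$ a manifold, e.g. $M=Y$ or $M=\mathbb{R},\mathbb{C}$) is called c-bounded if for every compact $K\subseteq X$ there exist $\varepsilon_0>0$ and a compact $K'\subseteq M$ with $v_\varepsilon(K)\subseteq K'$ for all $\varepsilon<\varepsilon_0$. For a manifold $M$, $M_c$ denotes the set of compactly supported nets $(p_\varepsilon)_\varepsilon\in M^I$, i.e., nets for which there exist a compact $K\subseteq M$ and $\varepsilon_0>0$ with $p_\varepsilon\in K$ for all $\varepsilon<\varepsilon_0$. *)

theory Defs
  imports "HOL-Analysis.Analysis"
begin

fun ck_on :: "nat \<Rightarrow> 'a::real_normed_vector set \<Rightarrow> ('a \<Rightarrow> 'b::real_normed_vector) \<Rightarrow> bool" where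
  "ck_on 0 S f = continuous_on S f"
| "ck_on (Suc k) S f =
     (\<exists>f'. (\<forall>x\<in>S. (f has_derivative f' x) (at x)) \<and> (\<forall>v. ck_on k S (\<lambda>x. f' x v)))"

definition smooth_on :: "'a::real_normed_vector set \<Rightarrow> ('a \<Rightarrow> 'b::real_normed_vector) \<Rightarrow> bool" where
  "smooth_on S f \<longleftrightarrow> (\<forall>k. ck_on k S f)"

definition paracompact_space :: "'a topology \<Rightarrow> bool" where
  "paracompact_space T \<longleftrightarrow>
     (\<forall>\<U>. (\<forall>U\<in>\<U>. openin T U) \<and> \<Union>\<U> = topspace T \<longrightarrow>
        (\<exists>\<V>. (\<forall>V\<in>\<V>. openin T V) \<and> \<Union>\<V> = topspace T \<and>
             (\<forall>V\<in>\<V>. \<exists>U\<in>\<U>. V \<subseteq> U) \<and> locally_finite_in T \<V>))"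

definition chart :: "'a topology \<Rightarrow> 'a set \<Rightarrow> ('a \<Rightarrow> 'e::euclidean_space) \<Rightarrow> bool" where
  "chart T U \<phi> \<longleftrightarrow> openin T U \<and> open (\<phi> ` U) \<and>
     homeomorphic_map (subtopology T U) (top_of_set (\<phi> ` U)) \<phi>"

definition smooth_manifold :: "'a topology \<Rightarrow> ('a set \<times> ('a \<Rightarrow> 'e::euclidean_space)) set \<Rightarrow> bool" where
  "smooth_manifold T A \<longleftrightarrow>
     Hausdorff_space T \<and> paracompact_space T \<and>
     \<Union>(fst ` A) = topspace T \<and>
     (\<forall>(U,\<phi>)\<in>A. chart T U \<phi>) \<and>
     (\<forall>(U,\<phi>)\<in>A. \<forall>(V,\<psi>)\<in>A. smooth_on (\<phi> ` (U \<inter> V)) (\<psi> \<circ> inv_into U \<phi>))"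

definition smooth_fun :: "('a set \<times> ('a \<Rightarrow> 'e::euclidean_space)) set \<Rightarrow> ('a \<Rightarrow> 'k::real_normed_vector) \<Rightarrow> bool" where
  "smooth_fun A f \<longleftrightarrow> (\<forall>(U,\<phi>)\<in>A. smooth_on (\<phi> ` U) (f \<circ> inv_into U \<phi>))"

definition smooth_map ::
  "'a topology \<Rightarrow> ('a set \<times> ('a \<Rightarrow> 'e::euclidean_space)) set \<Rightarrow>
   'b topology \<Rightarrow> ('b set \<times> ('b \<Rightarrow> 'f::euclidean_space)) set \<Rightarrow> ('a \<Rightarrow> 'b) \<Rightarrow> bool" where
  "smooth_map TX AX TY AY u \<longleftrightarrow> continuous_map TX TY u \<and>
     (\<forall>(U,\<phi>)\<in>AX. \<forall>(V,\<psi>)\<in>AY. smooth_on (\<phi> ` (U \<inter> u -` V)) (\<psi> \<circ> u \<circ> inv_into U \<phi>))"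

definition c_bounded :: "'a topology \<Rightarrow> 'm topology \<Rightarrow> (real \<Rightarrow> 'a \<Rightarrow> 'm) \<Rightarrow> bool" where
  "c_bounded TX TM v \<longleftrightarrow>
     (\<forall>K. compactin TX K \<longrightarrow>
        (\<exists>\<epsilon>0>0. \<exists>K'. compactin TM K' \<and>
            (\<forall>\<epsilon>\<in>{0<..1}. \<epsilon> < \<epsilon>0 \<longrightarrow> v \<epsilon> ` K \<subseteq> K')))"

definition cs_nets :: "'m topology \<Rightarrow> (real \<Rightarrow> 'm) set" where
  "cs_nets TM = {p. \<exists>K \<epsilon>0. compactin TM K \<and> \<epsilon>0 > 0 \<and>
                        (\<forall>\<epsilon>\<in>{0<..1}. \<epsilon> < \<epsilon>0 \<longrightarrow> p \<epsilon> \<in> K)}"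

definition moderate0 :: "'a topology \<Rightarrow> (real \<Rightarrow> 'a \<Rightarrow> 'k::real_normed_vector) \<Rightarrow> bool" where
  "moderate0 TX g \<longleftrightarrow>
     (\<forall>K. compactin TX K \<longrightarrow>
        (\<exists>N::nat. \<exists>C \<epsilon>0. \<epsilon>0 > 0 \<and>
           (\<forall>\<epsilon>\<in>{0<..1}. \<epsilon> < \<epsilon>0 \<longrightarrow> (\<forall>p\<in>K. norm (g \<epsilon> p) \<le> C * \<epsilon> powr (- real N)))))"

end

theory Submission
  imports Defs "HOL-Computational_Algebra.Polynomial"
begin

(* c-boundedness of (u_eps) passes to (f o u_eps) for every continuous f, implies moderateness
   of order zero for scalar nets, and makes u map compactly supported nets to compactly
   supported ones. Conversely, if (u_eps) is not c-bounded, paracompactness and local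
   compactness of Y yield a compact K, eps_n -> 0 and x_n in K such that every compact subset
   of Y contains only finitely many of the points y_n = u_{eps_n}(x_n), together with chart
   balls around the y_n forming a locally finite family. The net equal to x_n at eps_n then
   violates (iv), and a locally finite sum of bump functions on these balls with
   f(y_n) >= n eps_n^(-n) is a smooth f violating (iii), hence (ii). *)

section \<open>Calculus of \<open>C\<^sup>k\<close> functions on open sets\<close>

lemma ck_on_SucI:
  "(\<And>x. x \<in> S \<Longrightarrow> (f has_derivative f' x) (at x)) \<Longrightarrow> (\<And>v. ck_on k S (\<lambda>x. f' x v)) \<Longrightarrow>
   ck_on (Suc k) S f"
  by auto

lemma ck_on_SucE:
  assumes "ck_on (Suc k) S f"
  obtains f' where "\<And>x. x \<in> S \<Longrightarrow> (f has_derivative f' x) (at x)" "\<And>v. ck_on k S (\<lambda>x. f' x v)"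
  using assms by auto

lemma ck_on_Suc_imp: "ck_on (Suc k) S f \<Longrightarrow> ck_on k S f"
proof (induction k arbitrary: f)
  case 0
  then obtain f' where "\<And>x. x \<in> S \<Longrightarrow> (f has_derivative f' x) (at x)"
    by (auto elim: ck_on_SucE)
  then show ?case
    by (auto intro!: continuous_at_imp_continuous_on has_derivative_continuous)
next
  case (Suc k)
  from Suc.prems obtain f' where
    f': "\<And>x. x \<in> S \<Longrightarrow> (f has_derivative f' x) (at x)" "\<And>v. ck_on (Suc k) S (\<lambda>x. f' x v)"
    by (elim ck_on_SucE) blast
  show ?case
    by (rule ck_on_SucI[OF f'(1) Suc.IH[OF f'(2)]])
qed

lemma ck_on_subset: "ck_on k S f \<Longrightarrow> T \<subseteq> S \<Longrightarrow> ck_on k T f"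
proof (induction k arbitrary: f)
  case 0
  then show ?case by (auto intro: continuous_on_subset)
next
  case (Suc k)
  from Suc.prems(1) obtain f' where
    "\<And>x. x \<in> S \<Longrightarrow> (f has_derivative f' x) (at x)" "\<And>v. ck_on k S (\<lambda>x. f' x v)"
    by (elim ck_on_SucE) blast
  with Suc.prems(2) show ?case by (intro ck_on_SucI Suc.IH) auto
qed

lemma ck_on_cong:
  assumes S: "open S" and eq: "\<And>x. x \<in> S \<Longrightarrow> f x = g x" and f: "ck_on k S f"
  shows "ck_on k S g"
proof (cases k)
  case 0
  with eq f show ?thesis by (auto intro: continuous_on_cong[THEN iffD1])
next
  case (Suc m)
  from f[unfolded Suc] obtain f' where
    f': "\<And>x. x \<in> S \<Longrightarrow> (f has_derivative f' x) (at x)" "\<And>v. ck_on m S (\<lambda>x. f' x v)"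
    by (elim ck_on_SucE) blast
  have "\<And>x. x \<in> S \<Longrightarrow> (g has_derivative f' x) (at x)"
    using f'(1) S eq by (metis has_derivative_transform_within_open)
  with Suc f'(2) show ?thesis by (auto intro: ck_on_SucI)
qed

text \<open>Derivatives are unique, so the ones chosen on the various neighbourhoods all agree with the
  global Frechet derivative.\<close>
lemma ck_on_local:
  assumes "open S" "\<And>x. x \<in> S \<Longrightarrow> \<exists>W. open W \<and> x \<in> W \<and> W \<subseteq> S \<and> ck_on k W f"
  shows "ck_on k S f"
  using assms
proof (induction k arbitrary: f)
  case 0
  have "isCont f x" if "x \<in> S" for x
    using 0(2)[OF that] continuous_on_eq_continuous_at by auto
  then show ?case by (simp add: continuous_at_imp_continuous_on)
next
  case (Suc k)
  define F where "F x = frechet_derivative f (at x)" for x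
  have local_deriv: "\<exists>W. open W \<and> x \<in> W \<and> W \<subseteq> S \<and> (\<forall>y\<in>W. (f has_derivative F y) (at y)) \<and>
      (\<forall>v. ck_on k W (\<lambda>y. F y v))" if x: "x \<in> S" for x
  proof -
    obtain W where W: "open W" "x \<in> W" "W \<subseteq> S" "ck_on (Suc k) W f"
      using Suc.prems(2)[OF x] by blast
    from W(4) obtain f' where
      f': "\<And>y. y \<in> W \<Longrightarrow> (f has_derivative f' y) (at y)" "\<And>v. ck_on k W (\<lambda>y. f' y v)"
      by (elim ck_on_SucE) blast
    have eq: "\<forall>y\<in>W. F y = f' y"
      using f'(1) unfolding F_def by (metis frechet_derivative_at)
    have "ck_on k W (\<lambda>y. F y v)" for v
      by (rule ck_on_cong[OF W(1) _ f'(2)]) (simp add: eq)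
    with W(1-3) f'(1) eq show ?thesis by (intro exI[of _ W]) auto
  qed
  show ?case
  proof (rule ck_on_SucI)
    show "(f has_derivative F x) (at x)" if "x \<in> S" for x
      using local_deriv[OF that] by blast
    show "ck_on k S (\<lambda>y. F y v)" for v
      using Suc.IH[OF Suc.prems(1)] local_deriv by meson
  qed
qed

lemma ck_on_const: "ck_on k S (\<lambda>x. c)"
proof (induction k arbitrary: c)
  case 0
  then show ?case by simp
next
  case (Suc k)
  show ?case by (rule ck_on_SucI[where f'="\<lambda>x v. 0"]) (auto simp: Suc)
qed

lemma ck_on_linear: "bounded_linear L \<Longrightarrow> ck_on k S g \<Longrightarrow> ck_on k S (\<lambda>x. L (g x))"
proof (induction k arbitrary: g)
  case 0
  then show ?case by (simp add: bounded_linear.continuous_on)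
next
  case (Suc k)
  from Suc.prems(2) obtain g' where
    g': "\<And>x. x \<in> S \<Longrightarrow> (g has_derivative g' x) (at x)" "\<And>v. ck_on k S (\<lambda>x. g' x v)"
    by (elim ck_on_SucE) blast
  show ?case
  proof (rule ck_on_SucI[where f'="\<lambda>x v. L (g' x v)"])
    show "((\<lambda>x. L (g x)) has_derivative (\<lambda>v. L (g' x v))) (at x)" if "x \<in> S" for x
      using g'(1)[OF that] Suc.prems(1) by (auto intro: bounded_linear.has_derivative)
    show "ck_on k S (\<lambda>x. L (g' x v))" for v
      using Suc.IH[OF Suc.prems(1) g'(2)] .
  qed
qed

lemma ck_on_add: "ck_on k S f \<Longrightarrow> ck_on k S g \<Longrightarrow> ck_on k S (\<lambda>x. f x + g x)"
proof (induction k arbitrary: f g)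
  case 0
  then show ?case by (simp add: continuous_on_add)
next
  case (Suc k)
  from Suc.prems(1) obtain f' where
    f': "\<And>x. x \<in> S \<Longrightarrow> (f has_derivative f' x) (at x)" "\<And>v. ck_on k S (\<lambda>x. f' x v)"
    by (elim ck_on_SucE) blast
  from Suc.prems(2) obtain g' where
    g': "\<And>x. x \<in> S \<Longrightarrow> (g has_derivative g' x) (at x)" "\<And>v. ck_on k S (\<lambda>x. g' x v)"
    by (elim ck_on_SucE) blast
  show ?case
  proof (rule ck_on_SucI[where f'="\<lambda>x v. f' x v + g' x v"])
    show "((\<lambda>x. f x + g x) has_derivative (\<lambda>v. f' x v + g' x v)) (at x)" if "x \<in> S" for x
      using f' g' that by (auto intro: has_derivative_add)
    show "ck_on k S (\<lambda>x. f' x v + g' x v)" for v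
      using Suc.IH[OF f'(2) g'(2)] .
  qed
qed

lemma ck_on_bilinear:
  assumes P: "bounded_bilinear P"
  shows "ck_on k S f \<Longrightarrow> ck_on k S g \<Longrightarrow> ck_on k S (\<lambda>x. P (f x) (g x))"
proof (induction k arbitrary: f g)
  case 0
  then show ?case using bounded_bilinear.continuous_on[OF P] by auto
next
  case (Suc k)
  from Suc.prems(1) obtain f' where
    f': "\<And>x. x \<in> S \<Longrightarrow> (f has_derivative f' x) (at x)" "\<And>v. ck_on k S (\<lambda>x. f' x v)"
    by (elim ck_on_SucE) blast
  from Suc.prems(2) obtain g' where
    g': "\<And>x. x \<in> S \<Longrightarrow> (g has_derivative g' x) (at x)" "\<And>v. ck_on k S (\<lambda>x. g' x v)"
    by (elim ck_on_SucE) blast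
  have "ck_on k S f" using Suc.prems(1) by (rule ck_on_Suc_imp)
  have "ck_on k S g" using Suc.prems(2) by (rule ck_on_Suc_imp)
  show ?case
  proof (rule ck_on_SucI[where f'="\<lambda>x v. P (f x) (g' x v) + P (f' x v) (g x)"])
    show "((\<lambda>x. P (f x) (g x)) has_derivative (\<lambda>v. P (f x) (g' x v) + P (f' x v) (g x))) (at x)"
      if "x \<in> S" for x
      using f'(1)[OF that] g'(1)[OF that] by (rule bounded_bilinear.FDERIV[OF P])
    show "ck_on k S (\<lambda>x. P (f x) (g' x v) + P (f' x v) (g x))" for v
      by (intro ck_on_add Suc.IH) (use \<open>ck_on k S f\<close> \<open>ck_on k S g\<close> f' g' in auto)
  qed
qed

lemma ck_on_sum:
  "finite F \<Longrightarrow> (\<And>i. i \<in> F \<Longrightarrow> ck_on k S (h i)) \<Longrightarrow> ck_on k S (\<lambda>x. \<Sum>i\<in>F. h i x)"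
  by (induction F rule: finite_induct) (auto intro: ck_on_add ck_on_const)

lemma smooth_on_has_derivative:
  assumes "open S" "smooth_on S f"
  obtains f' where "\<And>x. x \<in> S \<Longrightarrow> (f has_derivative f' x) (at x)" "\<And>v. smooth_on S (\<lambda>x. f' x v)"
proof -
  from assms(2) have "ck_on (Suc 0) S f" by (simp add: smooth_on_def del: ck_on.simps)
  then obtain f' where f': "\<And>x. x \<in> S \<Longrightarrow> (f has_derivative f' x) (at x)"
    by (auto elim: ck_on_SucE)
  have f'_ck: "ck_on k S (\<lambda>x. f' x v)" for v k
  proof -
    from assms(2) have "ck_on (Suc k) S f" by (simp add: smooth_on_def del: ck_on.simps)
    then obtain f'' where
      f'': "\<And>x. x \<in> S \<Longrightarrow> (f has_derivative f'' x) (at x)" "\<And>v. ck_on k S (\<lambda>x. f'' x v)"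
      by (elim ck_on_SucE) blast
    have "\<forall>x\<in>S. f'' x = f' x"
      using f' f'' frechet_derivative_at by metis
    then show ?thesis
      by (intro ck_on_cong[OF assms(1) _ f''(2)]) simp
  qed
  then have "smooth_on S (\<lambda>x. f' x v)" for v
    unfolding smooth_on_def by blast
  with f' show ?thesis by (rule that)
qed

lemma ck_on_compose_smooth_real:
  fixes g :: "'a::real_normed_vector \<Rightarrow> real" and \<rho> :: "real \<Rightarrow> real"
  shows "smooth_on UNIV \<rho> \<Longrightarrow> ck_on k S g \<Longrightarrow> ck_on k S (\<lambda>x. \<rho> (g x))"
proof (induction k arbitrary: \<rho> g)
  case 0
  then have "continuous_on UNIV \<rho>"
    unfolding smooth_on_def by (metis ck_on.simps(1))
  with 0 show ?case by (auto intro: continuous_on_compose2)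
next
  case (Suc k)
  obtain \<rho>' where
    \<rho>': "\<And>t. (\<rho> has_derivative \<rho>' t) (at t)" "\<And>v. smooth_on UNIV (\<lambda>t. \<rho>' t v)"
    by (rule smooth_on_has_derivative[OF open_UNIV Suc.prems(1)]) blast
  from Suc.prems(2) obtain g' where
    g': "\<And>x. x \<in> S \<Longrightarrow> (g has_derivative g' x) (at x)" "\<And>v. ck_on k S (\<lambda>x. g' x v)"
    by (elim ck_on_SucE) blast
  have "ck_on k S g" using Suc.prems(2) by (rule ck_on_Suc_imp)
  have \<rho>'_scale: "\<rho>' t w = w * \<rho>' t 1" for t w
    using linear_scale_real[OF has_derivative_linear[OF \<rho>'(1)], where r=w and b=1] by simp
  show ?case
  proof (rule ck_on_SucI[where f'="\<lambda>x v. g' x v * \<rho>' (g x) 1"])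
    show "((\<lambda>x. \<rho> (g x)) has_derivative (\<lambda>v. g' x v * \<rho>' (g x) 1)) (at x)" if "x \<in> S" for x
      using has_derivative_compose[OF g'(1)[OF that] \<rho>'(1)] by (subst (asm) \<rho>'_scale) simp
    show "ck_on k S (\<lambda>x. g' x v * \<rho>' (g x) 1)" for v
      using g'(2) Suc.IH[OF \<rho>'(2)[of 1] \<open>ck_on k S g\<close>]
      by (rule ck_on_bilinear[OF bounded_bilinear_mult])
  qed
qed

lemma smooth_on_subset: "smooth_on S f \<Longrightarrow> T \<subseteq> S \<Longrightarrow> smooth_on T f"
  by (auto simp: smooth_on_def intro: ck_on_subset)

lemma smooth_on_cong: "open S \<Longrightarrow> (\<And>x. x \<in> S \<Longrightarrow> f x = g x) \<Longrightarrow> smooth_on S f \<Longrightarrow> smooth_on S g"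
  by (auto simp: smooth_on_def intro: ck_on_cong)

lemma smooth_on_local:
  "open S \<Longrightarrow> (\<And>x. x \<in> S \<Longrightarrow> \<exists>W. open W \<and> x \<in> W \<and> W \<subseteq> S \<and> smooth_on W f) \<Longrightarrow> smooth_on S f"
  unfolding smooth_on_def by (metis ck_on_local)

lemma smooth_on_const: "smooth_on S (\<lambda>x. c)"
  by (simp add: smooth_on_def ck_on_const)

lemma smooth_on_linear: "bounded_linear L \<Longrightarrow> smooth_on S g \<Longrightarrow> smooth_on S (\<lambda>x. L (g x))"
  by (simp add: smooth_on_def ck_on_linear)

lemma smooth_on_add: "smooth_on S f \<Longrightarrow> smooth_on S g \<Longrightarrow> smooth_on S (\<lambda>x. f x + g x)"
  by (simp add: smooth_on_def ck_on_add)

lemma smooth_on_diff: "smooth_on S f \<Longrightarrow> smooth_on S g \<Longrightarrow> smooth_on S (\<lambda>x. f x - g x)"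
  using smooth_on_add[OF _ smooth_on_linear[OF bounded_linear_minus[OF bounded_linear_ident]]] by simp

lemma smooth_on_bilinear:
  "bounded_bilinear P \<Longrightarrow> smooth_on S f \<Longrightarrow> smooth_on S g \<Longrightarrow> smooth_on S (\<lambda>x. P (f x) (g x))"
  by (simp add: smooth_on_def ck_on_bilinear)

lemma smooth_on_sum:
  "finite F \<Longrightarrow> (\<And>i. i \<in> F \<Longrightarrow> smooth_on S (h i)) \<Longrightarrow> smooth_on S (\<lambda>x. \<Sum>i\<in>F. h i x)"
  by (simp add: smooth_on_def ck_on_sum)

lemma smooth_on_compose_smooth_real:
  fixes g :: "'a::real_normed_vector \<Rightarrow> real" and \<rho> :: "real \<Rightarrow> real"
  shows "smooth_on UNIV \<rho> \<Longrightarrow> smooth_on S g \<Longrightarrow> smooth_on S (\<lambda>x. \<rho> (g x))"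
  using ck_on_compose_smooth_real[of \<rho> _ S g] unfolding smooth_on_def[of S] by blast

section \<open>The smooth function \<open>exp (- 1 / t)\<close>\<close>

text \<open>All derivatives of \<open>t \<mapsto> exp (- 1 / t)\<close> (extended by \<open>0\<close> for \<open>t \<le> 0\<close>) are of the
  same shape \<open>t \<mapsto> p (1 / t) exp (- 1 / t)\<close> with a polynomial \<open>p\<close>.\<close>
definition poly_exp_inv :: "real poly \<Rightarrow> real \<Rightarrow> real" where
  "poly_exp_inv p t = (if 0 < t then poly p (1 / t) * exp (- (1 / t)) else 0)"

definition poly_exp_inv_deriv :: "real poly \<Rightarrow> real poly" where
  "poly_exp_inv_deriv p = [:0, 0, 1:] * (p - pderiv p)"

definition smooth_step :: "real \<Rightarrow> real" where
  "smooth_step t = (if 0 < t then exp (- (1 / t)) else 0)"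

lemma poly_div_exp_tendsto_0: "((\<lambda>s. poly q s / exp s) \<longlongrightarrow> (0::real)) at_top"
proof -
  have "((\<lambda>s. \<Sum>i\<le>degree q. coeff q i * (s ^ i / exp s)) \<longlongrightarrow> (\<Sum>i\<le>degree q. coeff q i * 0)) at_top"
    by (intro tendsto_sum tendsto_mult tendsto_const tendsto_power_div_exp_0)
  then show ?thesis by (simp add: poly_altdef sum_divide_distrib)
qed

lemma poly_exp_inv_has_derivative_0: "(poly_exp_inv p has_real_derivative 0) (at 0)"
proof -
  have right: "((\<lambda>h. (poly_exp_inv p (0 + h) - poly_exp_inv p 0) / h) \<longlongrightarrow> 0) (at_right 0)"
  proof -
    have "((\<lambda>h. poly (pCons 0 p) (inverse h) / exp (inverse h)) \<longlongrightarrow> (0::real)) (at_right 0)"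
      using filterlim_compose[OF poly_div_exp_tendsto_0 filterlim_inverse_at_top_right] .
    moreover have "\<forall>\<^sub>F h in at_right 0. poly (pCons 0 p) (inverse h) / exp (inverse h) =
        (poly_exp_inv p (0 + h) - poly_exp_inv p 0) / h"
      using eventually_at_right_less[of 0]
      by eventually_elim (simp add: poly_exp_inv_def exp_minus divide_simps)
    ultimately show ?thesis by (rule Lim_transform_eventually)
  qed
  have "\<forall>\<^sub>F h in at_left (0::real). 0 = (poly_exp_inv p (0 + h) - poly_exp_inv p 0) / h"
    by (auto simp: poly_exp_inv_def eventually_at_filter)
  then have left: "((\<lambda>h. (poly_exp_inv p (0 + h) - poly_exp_inv p 0) / h) \<longlongrightarrow> 0) (at_left 0)"
    by (rule Lim_transform_eventually[OF tendsto_const])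
  show ?thesis
    unfolding DERIV_def by (rule filterlim_split_at[OF left right])
qed

lemma poly_exp_inv_has_derivative:
  "(poly_exp_inv p has_real_derivative poly_exp_inv (poly_exp_inv_deriv p) t) (at t)"
proof -
  consider "t > 0" | "t < 0" | "t = 0" by linarith
  then show ?thesis
  proof cases
    case 1
    have "((\<lambda>s. poly p (1/s) * exp (- (1/s))) has_real_derivative
            poly (pderiv p) (1/t) * (- 1 / t^2) * exp (- (1/t)) + poly p (1/t) * (exp (- (1/t)) * (1/t^2))) (at t)"
      using 1 by (auto intro!: derivative_eq_intros DERIV_chain2[OF poly_DERIV] simp: power2_eq_square)
    moreover have "poly (pderiv p) (1/t) * (- 1 / t^2) * exp (- (1/t)) + poly p (1/t) * (exp (- (1/t)) * (1/t^2))
        = poly_exp_inv (poly_exp_inv_deriv p) t"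
      using 1 by (simp add: poly_exp_inv_def poly_exp_inv_deriv_def algebra_simps power2_eq_square)
    ultimately have "((\<lambda>s. poly p (1/s) * exp (- (1/s))) has_real_derivative
        poly_exp_inv (poly_exp_inv_deriv p) t) (at t)"
      by simp
    then show ?thesis
      by (rule has_field_derivative_transform_within_open[where S="{0<..}"])
        (use 1 in \<open>auto simp: poly_exp_inv_def\<close>)
  next
    case 2
    then have "((\<lambda>s. 0) has_real_derivative poly_exp_inv (poly_exp_inv_deriv p) t) (at t)"
      by (simp add: poly_exp_inv_def)
    then show ?thesis
      by (rule has_field_derivative_transform_within_open[where S="{..<0}"])
        (use 2 in \<open>auto simp: poly_exp_inv_def\<close>)
  next
    case 3
    then show ?thesis using poly_exp_inv_has_derivative_0 by (simp add: poly_exp_inv_def)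
  qed
qed

lemma ck_on_poly_exp_inv: "ck_on k UNIV (poly_exp_inv p)"
proof (induction k arbitrary: p)
  case 0
  have "isCont (poly_exp_inv p) t" for t
    using poly_exp_inv_has_derivative DERIV_isCont by blast
  then show ?case by (simp add: continuous_at_imp_continuous_on)
next
  case (Suc k)
  show ?case
  proof (rule ck_on_SucI[where f'="\<lambda>t v. poly_exp_inv (poly_exp_inv_deriv p) t * v"])
    show "(poly_exp_inv p has_derivative (\<lambda>v. poly_exp_inv (poly_exp_inv_deriv p) t * v)) (at t)" for t
      using poly_exp_inv_has_derivative[of p t] by (simp add: has_field_derivative_def)
    have smult: "poly_exp_inv (smult v q) = (\<lambda>t. v * poly_exp_inv q t)" for v q
      by (auto simp: poly_exp_inv_def)
    show "ck_on k UNIV (\<lambda>t. poly_exp_inv (poly_exp_inv_deriv p) t * v)" for v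
      using Suc.IH[of "smult v (poly_exp_inv_deriv p)"] by (simp add: smult mult.commute)
  qed
qed

lemma smooth_on_smooth_step: "smooth_on UNIV smooth_step"
proof -
  have "smooth_step = poly_exp_inv 1"
    by (auto simp: smooth_step_def poly_exp_inv_def)
  then show ?thesis
    unfolding smooth_on_def using ck_on_poly_exp_inv by metis
qed

lemma smooth_step_nonneg: "smooth_step t \<ge> 0"
  and smooth_step_pos: "t > 0 \<Longrightarrow> smooth_step t > 0"
  and smooth_step_eq_0: "t \<le> 0 \<Longrightarrow> smooth_step t = 0"
  by (auto simp: smooth_step_def)

lemma chart_subset_topspace: "chart T U \<phi> \<Longrightarrow> U \<subseteq> topspace T"
  by (simp add: chart_def openin_subset)

lemma chart_homeomorphic_map:
  "chart T U \<phi> \<Longrightarrow> homeomorphic_map (subtopology T U) (top_of_set (\<phi> ` U)) \<phi>"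
  by (simp add: chart_def)

lemma topspace_subtopology_chart: "chart T U \<phi> \<Longrightarrow> topspace (subtopology T U) = U"
  using chart_subset_topspace by fastforce

lemma chart_inj_on: "chart T U \<phi> \<Longrightarrow> inj_on \<phi> U"
  by (metis chart_homeomorphic_map homeomorphic_imp_injective_map topspace_subtopology_chart)

lemma chart_inv_into: "chart T U \<phi> \<Longrightarrow> p \<in> U \<Longrightarrow> inv_into U \<phi> (\<phi> p) = p"
  by (simp add: chart_inj_on)

lemma open_chart_image:
  assumes c: "chart T U \<phi>" and W: "openin T W"
  shows "open (\<phi> ` (U \<inter> W))"
proof -
  have "openin (subtopology T U) (U \<inter> W)"
    using W by (simp add: openin_subtopology_Int2 inf_commute)
  then have "openin (top_of_set (\<phi> ` U)) (\<phi> ` (U \<inter> W))"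
    using homeomorphic_map_openness[OF chart_homeomorphic_map[OF c]] topspace_subtopology_chart[OF c]
    by blast
  moreover have "open (\<phi> ` U)"
    using c by (simp add: chart_def)
  ultimately show ?thesis using openin_open_trans by blast
qed

lemma openin_chart_preimage:
  assumes c: "chart T U \<phi>" and B: "open B"
  shows "openin T {w \<in> U. \<phi> w \<in> B}"
proof -
  have "openin (top_of_set (\<phi> ` U)) (\<phi> ` U \<inter> B)"
    using B by auto
  then have "openin (subtopology T U) {w \<in> topspace (subtopology T U). \<phi> w \<in> \<phi> ` U \<inter> B}"
    by (rule openin_continuous_map_preimage[OF homeomorphic_imp_continuous_map[OF chart_homeomorphic_map[OF c]]])
  moreover have "{w \<in> topspace (subtopology T U). \<phi> w \<in> \<phi> ` U \<inter> B} = {w \<in> U. \<phi> w \<in> B}"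
    using topspace_subtopology_chart[OF c] by auto
  ultimately show ?thesis
    using c openin_trans_full unfolding chart_def by metis
qed

lemma compactin_chart_preimage:
  assumes c: "chart T U \<phi>" and C: "compact C" "C \<subseteq> \<phi> ` U"
  shows "compactin T {w \<in> U. \<phi> w \<in> C}"
proof -
  have "\<phi> ` {w \<in> U. \<phi> w \<in> C} = C"
    using C(2) by auto
  moreover have "compactin (top_of_set (\<phi> ` U)) C"
    using C by (simp add: compactin_subtopology)
  ultimately have "compactin (subtopology T U) {w \<in> U. \<phi> w \<in> C}"
    using homeomorphic_map_compactness[OF chart_homeomorphic_map[OF c], of "{w \<in> U. \<phi> w \<in> C}"]
      topspace_subtopology_chart[OF c] by auto
  then show ?thesis by (simp add: compactin_subtopology)
qed

lemma smooth_manifold_chart: "smooth_manifold T A \<Longrightarrow> (U, \<phi>) \<in> A \<Longrightarrow> chart T U \<phi>"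
  unfolding smooth_manifold_def by auto

lemma smooth_manifold_transition:
  "smooth_manifold T A \<Longrightarrow> (U, \<phi>) \<in> A \<Longrightarrow> (V, \<psi>) \<in> A \<Longrightarrow>
   smooth_on (\<phi> ` (U \<inter> V)) (\<psi> \<circ> inv_into U \<phi>)"
  unfolding smooth_manifold_def by fast

lemma smooth_manifold_chart_at:
  assumes "smooth_manifold T A" "z \<in> topspace T"
  obtains U \<phi> where "(U, \<phi>) \<in> A" "z \<in> U"
proof -
  have "z \<in> \<Union>(fst ` A)"
    using assms unfolding smooth_manifold_def by auto
  then show ?thesis using that by force
qed

lemma smooth_manifold_locally_compact:
  assumes M: "smooth_manifold T A"
  shows "locally_compact_space T"
  unfolding locally_compact_space_def
proof
  fix z assume "z \<in> topspace T"
  with M obtain V \<psi> where V: "(V, \<psi>) \<in> A" "z \<in> V"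
    by (rule smooth_manifold_chart_at)
  have c: "chart T V \<psi>"
    using smooth_manifold_chart[OF M V(1)] .
  have "open (\<psi> ` V)"
    using c by (simp add: chart_def)
  with V(2) obtain e where e: "e > 0" "cball (\<psi> z) e \<subseteq> \<psi> ` V"
    using open_contains_cball by blast
  have "openin T {w \<in> V. \<psi> w \<in> ball (\<psi> z) e}"
    by (rule openin_chart_preimage[OF c open_ball])
  moreover have "compactin T {w \<in> V. \<psi> w \<in> cball (\<psi> z) e}"
    by (rule compactin_chart_preimage[OF c compact_cball e(2)])
  moreover have "{w \<in> V. \<psi> w \<in> ball (\<psi> z) e} \<subseteq> {w \<in> V. \<psi> w \<in> cball (\<psi> z) e}"
    by auto
  ultimately show "\<exists>U K. openin T U \<and> compactin T K \<and> z \<in> U \<and> U \<subseteq> K"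
    using V(2) e(1) by force
qed

lemma smooth_fun_continuous_map:
  fixes f :: "'b \<Rightarrow> 'k::real_normed_vector"
  assumes M: "smooth_manifold T A" and f: "smooth_fun A f"
  shows "continuous_map T euclidean f"
proof (rule pasting_lemma[where I=A and T=fst and f="\<lambda>_. f"])
  fix i assume "i \<in> A"
  moreover obtain U \<phi> where i: "i = (U, \<phi>)"
    by fastforce
  ultimately have UA: "(U, \<phi>) \<in> A" by simp
  have c: "chart T U \<phi>"
    using smooth_manifold_chart[OF M UA] .
  have "ck_on 0 (\<phi> ` U) (f \<circ> inv_into U \<phi>)"
    using f UA unfolding smooth_fun_def smooth_on_def by blast
  then have "continuous_map (top_of_set (\<phi> ` U)) euclidean (f \<circ> inv_into U \<phi>)"
    by simp
  then have "continuous_map (subtopology T U) euclidean ((f \<circ> inv_into U \<phi>) \<circ> \<phi>)"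
    by (rule continuous_map_compose[OF homeomorphic_imp_continuous_map[OF chart_homeomorphic_map[OF c]]])
  then show "continuous_map (subtopology T (fst i)) euclidean f"
    unfolding i fst_conv
    by (rule continuous_map_eq) (simp add: chart_inv_into[OF c] topspace_subtopology_chart[OF c])
  show "openin T (fst i)"
    using c i by (simp add: chart_def)
next
  fix x assume "x \<in> topspace T"
  with M obtain U \<phi> where "(U, \<phi>) \<in> A" "x \<in> U"
    by (rule smooth_manifold_chart_at)
  then show "\<exists>j. j \<in> A \<and> x \<in> fst j \<and> f x = f x"
    by force
qed auto

lemma smooth_fun_localI:
  assumes M: "smooth_manifold T A"
    and local: "\<And>p. p \<in> topspace T \<Longrightarrow> \<exists>W. openin T W \<and> p \<in> W \<and>
       (\<forall>(U, \<phi>)\<in>A. smooth_on (\<phi> ` (U \<inter> W)) (f \<circ> inv_into U \<phi>))"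
  shows "smooth_fun A f"
  unfolding smooth_fun_def
proof clarify
  fix U \<phi> assume UA: "(U, \<phi>) \<in> A"
  have c: "chart T U \<phi>"
    using smooth_manifold_chart[OF M UA] .
  show "smooth_on (\<phi> ` U) (f \<circ> inv_into U \<phi>)"
  proof (rule smooth_on_local)
    show "open (\<phi> ` U)"
      using c by (simp add: chart_def)
  next
    fix z assume z: "z \<in> \<phi> ` U"
    then obtain p where p: "p \<in> U" "z = \<phi> p"
      by blast
    then obtain W where W: "openin T W" "p \<in> W" "smooth_on (\<phi> ` (U \<inter> W)) (f \<circ> inv_into U \<phi>)"
      using local[of p] chart_subset_topspace[OF c] UA by blast
    then show "\<exists>W. open W \<and> z \<in> W \<and> W \<subseteq> \<phi> ` U \<and> smooth_on W (f \<circ> inv_into U \<phi>)"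
      using open_chart_image[OF c W(1)] p by (intro exI[of _ "\<phi> ` (U \<inter> W)"]) auto
  qed
qed

section \<open>Locally finite families and escaping sequences\<close>

text \<open>An indexed variant of \<^const>\<open>locally_finite_in\<close>: indices are counted, so a set that occurs
  for infinitely many indices is not locally finite.\<close>
definition locally_finite_family :: "'a topology \<Rightarrow> ('i \<Rightarrow> 'a set) \<Rightarrow> bool" where
  "locally_finite_family X S \<longleftrightarrow>
     (\<forall>x\<in>topspace X. \<exists>W. openin X W \<and> x \<in> W \<and> finite {i. S i \<inter> W \<noteq> {}})"

lemma locally_finite_family_subset:
  assumes "locally_finite_family X S" "\<And>i. S' i \<subseteq> S i"
  shows "locally_finite_family X S'"
  unfolding locally_finite_family_def
proof
  fix x assume "x \<in> topspace X"
  then obtain W where W: "openin X W" "x \<in> W" "finite {i. S i \<inter> W \<noteq> {}}"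
    using assms(1) unfolding locally_finite_family_def by blast
  have "{i. S' i \<inter> W \<noteq> {}} \<subseteq> {i. S i \<inter> W \<noteq> {}}"
    using assms(2) by blast
  with W show "\<exists>W. openin X W \<and> x \<in> W \<and> finite {i. S' i \<inter> W \<noteq> {}}"
    by (meson finite_subset)
qed

lemma locally_finite_family_finite_at:
  assumes "locally_finite_family X S" "x \<in> topspace X"
  shows "finite {i. x \<in> S i}"
proof -
  obtain W where W: "x \<in> W" "finite {i. S i \<inter> W \<noteq> {}}"
    using assms unfolding locally_finite_family_def by blast
  have "{i. x \<in> S i} \<subseteq> {i. S i \<inter> W \<noteq> {}}"
    using W(1) by blast
  then show ?thesis
    using W(2) by (rule finite_subset)
qed

lemma locally_finite_in_compactin_finite:
  assumes lf: "locally_finite_in X \<V>" and C: "compactin X C"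
  shows "finite {V \<in> \<V>. V \<inter> C \<noteq> {}}"
proof -
  define \<U> where "\<U> = {W. openin X W \<and> finite {V \<in> \<V>. V \<inter> W \<noteq> {}}}"
  have "C \<subseteq> \<Union>\<U>"
    using lf compactin_subset_topspace[OF C] unfolding locally_finite_in_def \<U>_def by blast
  moreover have "\<forall>U\<in>\<U>. openin X U"
    unfolding \<U>_def by blast
  ultimately obtain \<F> where \<F>: "finite \<F>" "\<F> \<subseteq> \<U>" "C \<subseteq> \<Union>\<F>"
    using C unfolding compactin_def by meson
  have "{V \<in> \<V>. V \<inter> C \<noteq> {}} \<subseteq> (\<Union>W\<in>\<F>. {V \<in> \<V>. V \<inter> W \<noteq> {}})"
    using \<F>(3) by blast
  moreover have "finite (\<Union>W\<in>\<F>. {V \<in> \<V>. V \<inter> W \<noteq> {}})"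
    using \<F>(1,2) unfolding \<U>_def by auto
  ultimately show ?thesis
    using finite_subset by blast
qed

lemma paracompact_locally_compact_cover:
  assumes "paracompact_space X" "locally_compact_space X"
  obtains \<V> C where "\<And>V. V \<in> \<V> \<Longrightarrow> openin X V" "\<Union>\<V> = topspace X" "locally_finite_in X \<V>"
    "\<And>V. V \<in> \<V> \<Longrightarrow> compactin X (C V) \<and> V \<subseteq> C V"
proof -
  define \<U> where "\<U> = {U. openin X U \<and> (\<exists>C. compactin X C \<and> U \<subseteq> C)}"
  have cover: "\<Union>\<U> = topspace X"
  proof
    show "\<Union>\<U> \<subseteq> topspace X"
      using openin_subset unfolding \<U>_def by blast
    show "topspace X \<subseteq> \<Union>\<U>"
      using assms(2) unfolding \<U>_def locally_compact_space_def by blast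
  qed
  have "\<forall>U\<in>\<U>. openin X U"
    unfolding \<U>_def by blast
  then obtain \<V> where \<V>: "\<forall>V\<in>\<V>. openin X V" "\<Union>\<V> = topspace X" "locally_finite_in X \<V>"
    "\<forall>V\<in>\<V>. \<exists>U\<in>\<U>. V \<subseteq> U"
    using assms(1)[unfolded paracompact_space_def, rule_format, OF conjI, OF _ cover] by blast
  have "\<exists>C. compactin X C \<and> V \<subseteq> C" if V: "V \<in> \<V>" for V
  proof -
    obtain U where "U \<in> \<U>" "V \<subseteq> U"
      using \<V>(4) V by blast
    then show ?thesis
      unfolding \<U>_def by auto
  qed
  then obtain C where "\<forall>V\<in>\<V>. compactin X (C V) \<and> V \<subseteq> C V"
    by (metis bchoice)
  with \<V> show ?thesis
    by (intro that[of \<V> C]) auto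
qed

lemma locally_finite_family_within_cover:
  assumes lf: "locally_finite_in X \<V>" and C: "\<And>V. V \<in> \<V> \<Longrightarrow> compactin X (C V) \<and> V \<subseteq> C V"
    and W: "\<And>n. W n \<in> \<V>" "\<And>n. y n \<in> W n" "\<And>n. S n \<subseteq> W n"
    and fin: "\<And>D. compactin X D \<Longrightarrow> finite {n. y n \<in> D}"
  shows "locally_finite_family X S"
  unfolding locally_finite_family_def
proof
  fix z assume "z \<in> topspace X"
  then obtain B where B: "openin X B" "z \<in> B" and finB: "finite {U \<in> \<V>. U \<inter> B \<noteq> {}}"
    using lf unfolding locally_finite_in_def by blast
  have "{n. S n \<inter> B \<noteq> {}} \<subseteq> (\<Union>U\<in>{U \<in> \<V>. U \<inter> B \<noteq> {}}. {n. y n \<in> C U})"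
    using W C by blast
  moreover have "finite (\<Union>U\<in>{U \<in> \<V>. U \<inter> B \<noteq> {}}. {n. y n \<in> C U})"
    using finB by (rule finite_UN_I) (use C fin in auto)
  ultimately show "\<exists>B. openin X B \<and> z \<in> B \<and> finite {n. S n \<inter> B \<noteq> {}}"
    using B finite_subset by blast
qed

lemma locally_finite_cover_star_compact:
  assumes lf: "locally_finite_in X \<V>" and C: "\<And>V. V \<in> \<V> \<Longrightarrow> compactin X (C V) \<and> V \<subseteq> C V"
    and y: "y \<in> topspace X"
  obtains L where "compactin X L" "\<And>V. V \<in> \<V> \<Longrightarrow> y \<in> V \<Longrightarrow> V \<subseteq> L"
proof
  have "finite {V \<in> \<V>. V \<inter> {y} \<noteq> {}}"
    using y by (intro locally_finite_in_compactin_finite[OF lf]) simp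
  then show "compactin X (\<Union>V\<in>{V \<in> \<V>. V \<inter> {y} \<noteq> {}}. C V)"
    using C by (intro compactin_Union) auto
  show "V \<subseteq> (\<Union>V\<in>{V \<in> \<V>. V \<inter> {y} \<noteq> {}}. C V)" if "V \<in> \<V>" "y \<in> V" for V
    using C that by blast
qed

text \<open>Each member of the cover contains at most one of the points \<open>y n\<close>: once it contains
  \<open>y m\<close> it lies in \<open>L m\<close>, which all later points avoid.\<close>
lemma finite_visits_compactin:
  assumes cover: "\<Union>\<V> = topspace X" and lf: "locally_finite_in X \<V>"
    and L_mono: "\<And>n. L n \<subseteq> L (Suc n)"
    and star: "\<And>n V. V \<in> \<V> \<Longrightarrow> y n \<in> V \<Longrightarrow> V \<subseteq> L n"
    and avoid: "\<And>n. y (Suc n) \<notin> L n"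
    and D: "compactin X D"
  shows "finite {n. y n \<in> D}"
proof -
  have later_points_outside: "y n \<notin> V" if "V \<in> \<V>" "y m \<in> V" "m < n" for V m n
  proof -
    obtain n' where n: "n = Suc n'" "m \<le> n'"
      using \<open>m < n\<close> by (metis less_Suc_eq_le lessE)
    have "V \<subseteq> L m"
      using star that(1,2) .
    also have "\<dots> \<subseteq> L n'"
      using lift_Suc_mono_le[of L, OF L_mono n(2)] .
    finally show ?thesis
      using avoid[of n'] n(1) by blast
  qed
  have finite_in_cover: "finite {n. y n \<in> V}" if "V \<in> \<V>" for V
  proof (cases "\<exists>m. y m \<in> V")
    case True
    then obtain m where "y m \<in> V" ..
    then have "{n. y n \<in> V} \<subseteq> {m}"
      using later_points_outside[OF that] by (metis linorder_neqE_nat mem_Collect_eq singletonI subsetI)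
    then show ?thesis
      by (rule finite_subset) simp
  qed simp
  have "{n. y n \<in> D} \<subseteq> (\<Union>V\<in>{V \<in> \<V>. V \<inter> D \<noteq> {}}. {n. y n \<in> V})"
    using cover compactin_subset_topspace[OF D] by blast
  moreover have "finite (\<Union>V\<in>{V \<in> \<V>. V \<inter> D \<noteq> {}}. {n. y n \<in> V})"
    using locally_finite_in_compactin_finite[OF lf D] finite_in_cover by blast
  ultimately show ?thesis
    by (rule finite_subset)
qed

lemma escaping_point:
  fixes u :: "real \<Rightarrow> 'a \<Rightarrow> 'b"
  assumes lf: "locally_finite_in Y \<V>" and C: "\<And>V. V \<in> \<V> \<Longrightarrow> compactin Y (C V) \<and> V \<subseteq> C V"
    and into: "\<And>\<epsilon>. \<epsilon> \<in> {0<..1} \<Longrightarrow> u \<epsilon> ` K \<subseteq> topspace Y"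
    and unbounded: "\<And>L e. compactin Y L \<Longrightarrow> e > 0 \<Longrightarrow> \<exists>\<epsilon>\<in>{0<..1}. \<epsilon> < e \<and> \<not> u \<epsilon> ` K \<subseteq> L"
    and L: "compactin Y L" and e: "e > 0"
  shows "\<exists>\<epsilon> x L'. \<epsilon> \<in> {0<..1} \<and> \<epsilon> < e \<and> x \<in> K \<and> u \<epsilon> x \<notin> L \<and> compactin Y L' \<and> L \<subseteq> L' \<and>
      (\<forall>V\<in>\<V>. u \<epsilon> x \<in> V \<longrightarrow> V \<subseteq> L')"
proof -
  obtain \<epsilon> x where \<epsilon>: "\<epsilon> \<in> {0<..1}" "\<epsilon> < e" and x: "x \<in> K" "u \<epsilon> x \<notin> L"
    using unbounded[OF L e] by blast
  obtain L' where L': "compactin Y L'" "\<And>V. V \<in> \<V> \<Longrightarrow> u \<epsilon> x \<in> V \<Longrightarrow> V \<subseteq> L'"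
    using locally_finite_cover_star_compact[OF lf C] into[OF \<epsilon>(1)] x(1) by blast
  have "compactin Y (L \<union> L')"
    using L L'(1) by (rule compactin_Un)
  with \<epsilon> x L' show ?thesis
    by (intro exI[of _ \<epsilon>] exI[of _ x] exI[of _ "L \<union> L'"]) auto
qed

lemma escaping_sequence:
  fixes u :: "real \<Rightarrow> 'a \<Rightarrow> 'b"
  assumes Y: "paracompact_space Y" "locally_compact_space Y"
    and into: "\<And>\<epsilon>. \<epsilon> \<in> {0<..1} \<Longrightarrow> u \<epsilon> ` K \<subseteq> topspace Y"
    and unbounded: "\<And>L e. compactin Y L \<Longrightarrow> e > 0 \<Longrightarrow> \<exists>\<epsilon>\<in>{0<..1}. \<epsilon> < e \<and> \<not> u \<epsilon> ` K \<subseteq> L"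
  obtains eps xs where "\<And>n. eps n \<in> {0<..1}" "\<And>n. eps (Suc n) < eps n" "eps \<longlonglongrightarrow> 0"
    "\<And>n. xs n \<in> K" "\<And>C. compactin Y C \<Longrightarrow> finite {n. u (eps n) (xs n) \<in> C}"
proof -
  obtain \<V> C where \<V>: "\<And>V. V \<in> \<V> \<Longrightarrow> openin Y V" "\<Union>\<V> = topspace Y" "locally_finite_in Y \<V>"
    and C: "\<And>V. V \<in> \<V> \<Longrightarrow> compactin Y (C V) \<and> V \<subseteq> C V"
    using paracompact_locally_compact_cover[OF Y] by blast
  define P where "P n = (\<lambda>(\<epsilon>, x, L). \<epsilon> \<in> {0<..1} \<and> \<epsilon> < 1 / Suc n \<and> x \<in> K \<and> compactin Y L \<and>
      (\<forall>V\<in>\<V>. u \<epsilon> x \<in> V \<longrightarrow> V \<subseteq> L))" for n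
  define Q where "Q = (\<lambda>(\<epsilon>, x :: 'a, L) (\<epsilon>', x', L'). \<epsilon>' < \<epsilon> \<and> L \<subseteq> L' \<and> u \<epsilon>' x' \<notin> L)"
  have "\<exists>g. \<forall>n. P n (g n) \<and> Q (g n) (g (Suc n))"
  proof (rule dependent_nat_choice)
    show "\<exists>s. P 0 s"
      using escaping_point[OF \<V>(3) C into unbounded compactin_empty zero_less_one] unfolding P_def by force
  next
    fix s n assume "P n s"
    moreover obtain \<epsilon> x L where s: "s = (\<epsilon>, x, L)"
      by (cases s) blast
    ultimately have "compactin Y L" "min \<epsilon> (1 / Suc (Suc n)) > 0"
      unfolding P_def by auto
    from escaping_point[OF \<V>(3) C into unbounded this] show "\<exists>s'. P (Suc n) s' \<and> Q s s'"
      unfolding P_def Q_def s by force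
  qed
  then obtain g where g: "\<And>n. P n (g n)" "\<And>n. Q (g n) (g (Suc n))"
    by blast
  define eps where "eps n = fst (g n)" for n
  define xs where "xs n = fst (snd (g n))" for n
  define L where "L n = snd (snd (g n))" for n
  have g_split: "g n = (eps n, xs n, L n)" for n
    by (simp add: eps_def xs_def L_def)
  have P: "P n (eps n, xs n, L n)" for n
    using g(1)[of n] unfolding g_split .
  have Q: "Q (eps n, xs n, L n) (eps (Suc n), xs (Suc n), L (Suc n))" for n
    using g(2)[of n] unfolding g_split .
  have escape: "finite {n. u (eps n) (xs n) \<in> D}" if "compactin Y D" for D
    using finite_visits_compactin[OF \<V>(2,3) _ _ _ that, of L "\<lambda>n. u (eps n) (xs n)"] P Q
    unfolding P_def Q_def by auto
  have eps_tendsto: "eps \<longlonglongrightarrow> 0"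
  proof (rule tendsto_sandwich[OF _ _ tendsto_const LIMSEQ_inverse_real_of_nat])
    show "\<forall>\<^sub>F n in sequentially. 0 \<le> eps n" "\<forall>\<^sub>F n in sequentially. eps n \<le> inverse (Suc n)"
      using P unfolding P_def by (auto simp: less_imp_le inverse_eq_divide)
  qed
  show ?thesis
    by (rule that[OF _ _ eps_tendsto _ escape]) (use P Q in \<open>auto simp: P_def Q_def\<close>)
qed

section \<open>Bump functions in charts\<close>

definition chart_cball :: "'b set \<Rightarrow> ('b \<Rightarrow> 'e::euclidean_space) \<Rightarrow> 'e \<Rightarrow> real \<Rightarrow> 'b set" where
  "chart_cball V \<psi> c r = {w \<in> V. \<psi> w \<in> cball c r}"

definition chart_bump :: "'b set \<Rightarrow> ('b \<Rightarrow> 'e::euclidean_space) \<Rightarrow> 'e \<Rightarrow> real \<Rightarrow> 'b \<Rightarrow> real" where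
  "chart_bump V \<psi> c r w = (if w \<in> V then smooth_step (r\<^sup>2 - (\<psi> w - c) \<bullet> (\<psi> w - c)) else 0)"

lemma chart_bump_nonneg: "chart_bump V \<psi> c r w \<ge> 0"
  by (simp add: chart_bump_def smooth_step_nonneg)

lemma chart_bump_center: "w \<in> V \<Longrightarrow> chart_bump V \<psi> (\<psi> w) r w = smooth_step (r\<^sup>2)"
  by (simp add: chart_bump_def)

lemma chart_bump_support:
  assumes "r > 0" "chart_bump V \<psi> c r w \<noteq> 0"
  shows "w \<in> chart_cball V \<psi> c r"
proof -
  have w: "w \<in> V" and "smooth_step (r\<^sup>2 - (\<psi> w - c) \<bullet> (\<psi> w - c)) \<noteq> 0"
    using assms(2) by (auto simp: chart_bump_def split: if_splits)
  then have "(norm (\<psi> w - c))\<^sup>2 < r\<^sup>2"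
    by (metis diff_gt_0_iff_gt not_less power2_norm_eq_inner smooth_step_eq_0)
  then have "dist c (\<psi> w) \<le> r"
    using assms(1) by (simp add: dist_norm norm_minus_commute power2_less_imp_less less_imp_le)
  with w show ?thesis by (simp add: chart_cball_def)
qed

lemma smooth_on_chart_bump:
  assumes M: "smooth_manifold T A" and UA: "(U, \<phi>) \<in> A" and VA: "(V, \<psi>) \<in> A"
  shows "smooth_on (\<phi> ` (U \<inter> V)) (chart_bump V \<psi> c r \<circ> inv_into U \<phi>)"
proof -
  have cU: "chart T U \<phi>" and cV: "chart T V \<psi>"
    using smooth_manifold_chart[OF M] UA VA by auto
  have \<psi>c: "smooth_on (\<phi> ` (U \<inter> V)) (\<lambda>z. \<psi> (inv_into U \<phi> z) - c)"
    using smooth_on_diff[OF smooth_manifold_transition[OF M UA VA] smooth_on_const] by simp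
  have "smooth_on (\<phi> ` (U \<inter> V)) (\<lambda>z. (\<psi> (inv_into U \<phi> z) - c) \<bullet> (\<psi> (inv_into U \<phi> z) - c))"
    by (rule smooth_on_bilinear[OF bounded_bilinear_inner \<psi>c \<psi>c])
  then have "smooth_on (\<phi> ` (U \<inter> V))
      (\<lambda>z. r\<^sup>2 - (\<psi> (inv_into U \<phi> z) - c) \<bullet> (\<psi> (inv_into U \<phi> z) - c))"
    by (rule smooth_on_diff[OF smooth_on_const])
  then have "smooth_on (\<phi> ` (U \<inter> V))
      (\<lambda>z. smooth_step (r\<^sup>2 - (\<psi> (inv_into U \<phi> z) - c) \<bullet> (\<psi> (inv_into U \<phi> z) - c)))"
    by (rule smooth_on_compose_smooth_real[OF smooth_on_smooth_step])
  then show ?thesis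
  proof (rule smooth_on_cong[rotated 2])
    show "open (\<phi> ` (U \<inter> V))"
      using open_chart_image[OF cU] cV by (simp add: chart_def)
  qed (auto simp: chart_bump_def chart_inv_into[OF cU])
qed

lemma closedin_chart_cball:
  assumes M: "smooth_manifold T A" and VA: "(V, \<psi>) \<in> A" and cb: "cball c r \<subseteq> \<psi> ` V"
  shows "closedin T (chart_cball V \<psi> c r)"
proof (rule compactin_imp_closedin)
  show "Hausdorff_space T"
    using M by (simp add: smooth_manifold_def)
  show "compactin T (chart_cball V \<psi> c r)"
    unfolding chart_cball_def
    by (rule compactin_chart_preimage[OF smooth_manifold_chart[OF M VA] compact_cball cb])
qed

lemma smooth_fun_chart_bump:
  assumes M: "smooth_manifold T A" and VA: "(V, \<psi>) \<in> A"
    and r: "r > 0" and cb: "cball c r \<subseteq> \<psi> ` V"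
  shows "smooth_fun A (chart_bump V \<psi> c r)"
proof (rule smooth_fun_localI[OF M])
  fix p assume p: "p \<in> topspace T"
  show "\<exists>W. openin T W \<and> p \<in> W \<and>
      (\<forall>(U, \<phi>)\<in>A. smooth_on (\<phi> ` (U \<inter> W)) (chart_bump V \<psi> c r \<circ> inv_into U \<phi>))"
  proof (cases "p \<in> V")
    case True
    moreover have "openin T V"
      using smooth_manifold_chart[OF M VA] by (simp add: chart_def)
    ultimately show ?thesis
      using smooth_on_chart_bump[OF M _ VA] by blast
  next
    case False
    define W where "W = topspace T - chart_cball V \<psi> c r"
    have W: "openin T W"
      unfolding W_def using closedin_chart_cball[OF M VA cb] by blast
    have "smooth_on (\<phi> ` (U \<inter> W)) (chart_bump V \<psi> c r \<circ> inv_into U \<phi>)" if UA: "(U, \<phi>) \<in> A" for U \<phi>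
    proof -
      have cU: "chart T U \<phi>"
        using smooth_manifold_chart[OF M UA] .
      show ?thesis
      proof (rule smooth_on_cong[OF open_chart_image[OF cU W] _ smooth_on_const])
        fix z assume "z \<in> \<phi> ` (U \<inter> W)"
        then obtain w where "w \<in> U" "w \<notin> chart_cball V \<psi> c r" "z = \<phi> w"
          unfolding W_def by blast
        then show "0 = (chart_bump V \<psi> c r \<circ> inv_into U \<phi>) z"
          using chart_bump_support[OF r] by (metis chart_inv_into[OF cU] comp_apply)
      qed
    qed
    moreover have "p \<in> W"
      using False p by (simp add: W_def chart_cball_def)
    ultimately show ?thesis
      using W by blast
  qed
qed

lemma smooth_fun_cmult:
  fixes h :: "'b \<Rightarrow> real"
  shows "smooth_fun A h \<Longrightarrow> smooth_fun A (\<lambda>w. c * h w)"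
  unfolding smooth_fun_def comp_def by (auto intro: smooth_on_linear[OF bounded_linear_mult_right])

lemma smooth_fun_locally_finite_sum:
  fixes g :: "'i \<Rightarrow> 'b \<Rightarrow> 'k::real_normed_vector"
  assumes M: "smooth_manifold T A" and g: "\<And>i. smooth_fun A (g i)"
    and lf: "locally_finite_family T (\<lambda>i. {w. g i w \<noteq> 0})"
  shows "smooth_fun A (\<lambda>w. \<Sum>i | g i w \<noteq> 0. g i w)"
proof (rule smooth_fun_localI[OF M])
  fix p assume "p \<in> topspace T"
  then obtain W where W: "openin T W" "p \<in> W" and finF: "finite {i. {w. g i w \<noteq> 0} \<inter> W \<noteq> {}}"
    using lf unfolding locally_finite_family_def by blast
  define F where "F = {i. {w. g i w \<noteq> 0} \<inter> W \<noteq> {}}"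
  have "smooth_on (\<phi> ` (U \<inter> W)) ((\<lambda>w. \<Sum>i | g i w \<noteq> 0. g i w) \<circ> inv_into U \<phi>)"
    if UA: "(U, \<phi>) \<in> A" for U \<phi>
  proof -
    have cU: "chart T U \<phi>"
      using smooth_manifold_chart[OF M UA] .
    have "smooth_on (\<phi> ` U) (\<lambda>z. g i (inv_into U \<phi> z))" for i
      using g UA unfolding smooth_fun_def comp_def by blast
    then have "smooth_on (\<phi> ` (U \<inter> W)) (\<lambda>z. g i (inv_into U \<phi> z))" for i
      by (rule smooth_on_subset) blast
    then have "smooth_on (\<phi> ` (U \<inter> W)) (\<lambda>z. \<Sum>i\<in>F. g i (inv_into U \<phi> z))"
      using finF unfolding F_def by (intro smooth_on_sum)
    then show ?thesis
    proof (rule smooth_on_cong[rotated 2])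
      show "open (\<phi> ` (U \<inter> W))"
        by (rule open_chart_image[OF cU W(1)])
      fix z assume "z \<in> \<phi> ` (U \<inter> W)"
      then obtain w where w: "w \<in> U" "w \<in> W" "z = \<phi> w"
        by blast
      have "(\<Sum>i\<in>F. g i w) = (\<Sum>i | g i w \<noteq> 0. g i w)"
        using finF w(2) unfolding F_def by (intro sum.mono_neutral_right) auto
      then show "(\<Sum>i\<in>F. g i (inv_into U \<phi> z)) = ((\<lambda>w. \<Sum>i | g i w \<noteq> 0. g i w) \<circ> inv_into U \<phi>) z"
        using w by (simp add: chart_inv_into[OF cU])
    qed
  qed
  with W show "\<exists>W. openin T W \<and> p \<in> W \<and>
      (\<forall>(U, \<phi>)\<in>A. smooth_on (\<phi> ` (U \<inter> W)) ((\<lambda>w. \<Sum>i | g i w \<noteq> 0. g i w) \<circ> inv_into U \<phi>))"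
    by blast
qed

lemma chart_cball_within:
  assumes M: "smooth_manifold T A" and W: "openin T W" "y \<in> W"
  obtains V \<psi> r where "(V, \<psi>) \<in> A" "y \<in> V" "r > 0" "cball (\<psi> y) r \<subseteq> \<psi> ` V"
    "chart_cball V \<psi> (\<psi> y) r \<subseteq> W"
proof -
  have "y \<in> topspace T"
    using openin_subset[OF W(1)] W(2) by blast
  with M obtain V \<psi> where V: "(V, \<psi>) \<in> A" "y \<in> V"
    by (rule smooth_manifold_chart_at)
  have cV: "chart T V \<psi>"
    using smooth_manifold_chart[OF M V(1)] .
  have "open (\<psi> ` (V \<inter> W))"
    by (rule open_chart_image[OF cV W(1)])
  moreover have "\<psi> y \<in> \<psi> ` (V \<inter> W)"
    using V(2) W(2) by blast
  ultimately obtain r where r: "r > 0" "cball (\<psi> y) r \<subseteq> \<psi> ` (V \<inter> W)"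
    by (meson open_contains_cball)
  have "cball (\<psi> y) r \<subseteq> \<psi> ` V"
    using r(2) by blast
  moreover have "chart_cball V \<psi> (\<psi> y) r \<subseteq> W"
  proof
    fix w assume "w \<in> chart_cball V \<psi> (\<psi> y) r"
    then have "w \<in> V" "\<psi> w \<in> \<psi> ` (V \<inter> W)"
      using r(2) by (auto simp: chart_cball_def)
    then show "w \<in> W"
      using inj_onD[OF chart_inj_on[OF cV]] by blast
  qed
  ultimately show ?thesis
    by (rule that[OF V r(1)])
qed

lemma locally_finite_chart_cballs:
  assumes M: "smooth_manifold T A" and y: "\<And>n. y n \<in> topspace T"
    and fin: "\<And>C. compactin T C \<Longrightarrow> finite {n. y n \<in> C}"
  obtains V \<psi> r where "\<And>n. (V n, \<psi> n) \<in> A" "\<And>n. y n \<in> V n" "\<And>n. r n > 0"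
    "\<And>n. cball (\<psi> n (y n)) (r n) \<subseteq> \<psi> n ` V n"
    "locally_finite_family T (\<lambda>n. chart_cball (V n) (\<psi> n) (\<psi> n (y n)) (r n))"
proof -
  have "paracompact_space T"
    using M by (simp add: smooth_manifold_def)
  then obtain \<V> C where \<V>: "\<And>V. V \<in> \<V> \<Longrightarrow> openin T V" "\<Union>\<V> = topspace T" "locally_finite_in T \<V>"
    and C: "\<And>V. V \<in> \<V> \<Longrightarrow> compactin T (C V) \<and> V \<subseteq> C V"
    using paracompact_locally_compact_cover smooth_manifold_locally_compact[OF M] by blast
  have "\<exists>V \<psi> r W. (V, \<psi>) \<in> A \<and> y n \<in> V \<and> r > 0 \<and> cball (\<psi> (y n)) r \<subseteq> \<psi> ` V \<and>
      W \<in> \<V> \<and> y n \<in> W \<and> chart_cball V \<psi> (\<psi> (y n)) r \<subseteq> W" for n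
  proof -
    obtain W where W: "W \<in> \<V>" "y n \<in> W"
      using \<V>(2) y[of n] by blast
    obtain V \<psi> r where "(V, \<psi>) \<in> A" "y n \<in> V" "r > 0" "cball (\<psi> (y n)) r \<subseteq> \<psi> ` V"
      "chart_cball V \<psi> (\<psi> (y n)) r \<subseteq> W"
      by (rule chart_cball_within[OF M \<V>(1)[OF W(1)] W(2)])
    with W show ?thesis
      by (intro exI[of _ V] exI[of _ \<psi>] exI[of _ r] exI[of _ W]) simp
  qed
  then obtain V \<psi> r W where VW: "\<And>n. (V n, \<psi> n) \<in> A \<and> y n \<in> V n \<and> r n > 0 \<and>
      cball (\<psi> n (y n)) (r n) \<subseteq> \<psi> n ` V n \<and> W n \<in> \<V> \<and> y n \<in> W n \<and>
      chart_cball (V n) (\<psi> n) (\<psi> n (y n)) (r n) \<subseteq> W n"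
    by metis
  have "locally_finite_family T (\<lambda>n. chart_cball (V n) (\<psi> n) (\<psi> n (y n)) (r n))"
  proof (rule locally_finite_family_within_cover[OF \<V>(3) C])
    show "W n \<in> \<V>" "y n \<in> W n" "chart_cball (V n) (\<psi> n) (\<psi> n (y n)) (r n) \<subseteq> W n" for n
      using VW by auto
  qed (use fin in auto)
  then show ?thesis
    by (intro that[of V \<psi> r]) (use VW in auto)
qed

lemma le_sum_nonzero:
  fixes g :: "'i \<Rightarrow> real"
  assumes "\<And>i. g i \<ge> 0" "finite {i. g i \<noteq> 0}"
  shows "g j \<le> (\<Sum>i | g i \<noteq> 0. g i)"
proof (cases "g j = 0")
  case True
  then show ?thesis using assms(1) by (simp add: sum_nonneg)
next
  case False
  then show ?thesis using assms by (intro member_le_sum) auto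
qed

lemma smooth_fun_above_escaping_sequence:
  assumes M: "smooth_manifold T A" and y: "\<And>n. y n \<in> topspace T"
    and fin: "\<And>C. compactin T C \<Longrightarrow> finite {n. y n \<in> C}"
  obtains f :: "'b \<Rightarrow> real" where "smooth_fun A f" "\<And>n. b n \<le> f (y n)"
proof -
  obtain V \<psi> r where V: "\<And>n. (V n, \<psi> n) \<in> A" "\<And>n. y n \<in> V n" and r: "\<And>n. r n > 0"
    and cb: "\<And>n. cball (\<psi> n (y n)) (r n) \<subseteq> \<psi> n ` V n"
    and lf: "locally_finite_family T (\<lambda>n. chart_cball (V n) (\<psi> n) (\<psi> n (y n)) (r n))"
    using locally_finite_chart_cballs[OF M y fin] by blast
  define g where "g n w = max 0 (b n) / smooth_step ((r n)\<^sup>2) * chart_bump (V n) (\<psi> n) (\<psi> n (y n)) (r n) w"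
    for n w
  have step_pos: "smooth_step ((r n)\<^sup>2) > 0" for n
    using r[of n] by (intro smooth_step_pos) simp
  then have g_nonneg: "g n w \<ge> 0" for n w
    unfolding g_def by (intro mult_nonneg_nonneg chart_bump_nonneg divide_nonneg_pos) auto
  have g_center: "g n (y n) = max 0 (b n)" for n
    using V(2)[of n] step_pos[of n] by (simp add: g_def chart_bump_center)
  have g_lf: "locally_finite_family T (\<lambda>n. {w. g n w \<noteq> 0})"
    using lf by (rule locally_finite_family_subset) (auto simp: g_def dest: chart_bump_support[OF r])
  have "smooth_fun A (g n)" for n
    unfolding g_def by (rule smooth_fun_cmult[OF smooth_fun_chart_bump[OF M V(1) r cb]])
  then have "smooth_fun A (\<lambda>w. \<Sum>n | g n w \<noteq> 0. g n w)"
    by (rule smooth_fun_locally_finite_sum[OF M _ g_lf])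
  moreover have "b n \<le> (\<Sum>m | g m (y n) \<noteq> 0. g m (y n))" for n
  proof -
    have "g n (y n) \<le> (\<Sum>m | g m (y n) \<noteq> 0. g m (y n))"
      using g_nonneg locally_finite_family_finite_at[OF g_lf y[of n]] by (intro le_sum_nonzero) auto
    then show ?thesis
      using g_center[of n] by simp
  qed
  ultimately show ?thesis
    by (rule that)
qed

lemma c_bounded_compose:
  assumes u: "c_bounded TX TY u" and f: "continuous_map TY TZ f"
  shows "c_bounded TX TZ (\<lambda>\<epsilon> x. f (u \<epsilon> x))"
  unfolding c_bounded_def
proof (intro allI impI)
  fix K assume "compactin TX K"
  then obtain e K' where "e > 0" "compactin TY K'" "\<forall>\<epsilon>\<in>{0<..1}. \<epsilon> < e \<longrightarrow> u \<epsilon> ` K \<subseteq> K'"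
    using u unfolding c_bounded_def by blast
  moreover have "compactin TZ (f ` K')"
    using image_compactin[OF \<open>compactin TY K'\<close> f] .
  ultimately show "\<exists>e>0. \<exists>K'. compactin TZ K' \<and> (\<forall>\<epsilon>\<in>{0<..1}. \<epsilon> < e \<longrightarrow> (\<lambda>x. f (u \<epsilon> x)) ` K \<subseteq> K')"
    by (intro exI[of _ e] exI[of _ "f ` K'"]) blast
qed

lemma c_bounded_imp_moderate0:
  fixes g :: "real \<Rightarrow> 'a \<Rightarrow> 'k::real_normed_vector"
  assumes "c_bounded TX euclidean g"
  shows "moderate0 TX g"
  unfolding moderate0_def
proof (intro allI impI)
  fix K assume "compactin TX K"
  then obtain e K' where e: "e > 0" "compact K'" "\<forall>\<epsilon>\<in>{0<..1}. \<epsilon> < e \<longrightarrow> g \<epsilon> ` K \<subseteq> K'"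
    using assms unfolding c_bounded_def by auto
  obtain B where "\<forall>y\<in>K'. norm y \<le> B"
    using compact_imp_bounded[OF e(2)] by (meson bounded_iff)
  with e show "\<exists>N::nat. \<exists>C e. e > 0 \<and>
      (\<forall>\<epsilon>\<in>{0<..1}. \<epsilon> < e \<longrightarrow> (\<forall>p\<in>K. norm (g \<epsilon> p) \<le> C * \<epsilon> powr (- real N)))"
    by (intro exI[of _ 0] exI[of _ B] exI[of _ e]) auto
qed

lemma c_bounded_cs_nets:
  assumes u: "c_bounded TX TY u" and x: "x \<in> cs_nets TX"
  shows "(\<lambda>\<epsilon>. u \<epsilon> (x \<epsilon>)) \<in> cs_nets TY"
proof -
  obtain K e where K: "compactin TX K" "e > 0" "\<forall>\<epsilon>\<in>{0<..1}. \<epsilon> < e \<longrightarrow> x \<epsilon> \<in> K"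
    using x unfolding cs_nets_def by blast
  obtain e' K' where K': "e' > 0" "compactin TY K'" "\<forall>\<epsilon>\<in>{0<..1}. \<epsilon> < e' \<longrightarrow> u \<epsilon> ` K \<subseteq> K'"
    using u K(1) unfolding c_bounded_def by blast
  have "\<forall>\<epsilon>\<in>{0<..1}. \<epsilon> < min e e' \<longrightarrow> u \<epsilon> (x \<epsilon>) \<in> K'"
    using K(3) K'(3) by auto
  with K(2) K'(1,2) show ?thesis
    unfolding cs_nets_def by (intro CollectI exI[of _ K'] exI[of _ "min e e'"]) auto
qed

lemma not_moderate0_if_blowup:
  fixes g :: "real \<Rightarrow> 'a \<Rightarrow> 'k::real_normed_vector"
  assumes K: "compactin X K" and xs: "\<And>n. xs n \<in> K"
    and eps: "\<And>n. eps n \<in> {0<..1}" "eps \<longlonglongrightarrow> 0"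
    and blowup: "\<And>n. real n * eps n powr (- real n) \<le> norm (g (eps n) (xs n))"
  shows "\<not> moderate0 X g"
proof
  assume "moderate0 X g"
  then obtain N :: nat and C e where "e > 0" and
    bound: "\<forall>\<epsilon>\<in>{0<..1}. \<epsilon> < e \<longrightarrow> (\<forall>p\<in>K. norm (g \<epsilon> p) \<le> C * \<epsilon> powr (- real N))"
    using K unfolding moderate0_def by blast
  have "\<forall>\<^sub>F n in sequentially. eps n < e"
    using order_tendstoD(2)[OF eps(2) \<open>e > 0\<close>] .
  moreover have "\<forall>\<^sub>F n in sequentially. N \<le> n \<and> C < real n"
    using eventually_ge_at_top[of "max N (nat \<lceil>C + 1\<rceil>)"] by eventually_elim linarith
  ultimately have "\<forall>\<^sub>F n in sequentially. eps n < e \<and> N \<le> n \<and> C < real n"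
    by eventually_elim blast
  then obtain n where n: "eps n < e" "N \<le> n" "C < real n"
    using eventually_happens'[OF sequentially_bot] by blast
  have pos: "eps n powr (- real N) > 0"
    using eps(1)[of n] by simp
  have "real n * eps n powr (- real N) \<le> real n * eps n powr (- real n)"
    using eps(1)[of n] n(2) by (intro mult_left_mono powr_mono') auto
  also have "\<dots> \<le> C * eps n powr (- real N)"
    using blowup[of n] bound eps(1)[of n] n(1) xs[of n] by fastforce
  finally have "real n \<le> C"
    using pos by simp
  with n(3) show False
    by simp
qed

lemma not_cs_nets_if_escaping:
  assumes K: "compactin X K" and xs: "\<And>n. xs n \<in> K"
    and eps: "\<And>n. eps n \<in> {0<..1}" "\<And>n. eps (Suc n) < eps n" "eps \<longlonglongrightarrow> 0"
    and escape: "\<And>C. compactin Y C \<Longrightarrow> finite {n. u (eps n) (xs n) \<in> C}"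
  shows "\<exists>x\<in>cs_nets X. (\<lambda>\<epsilon>. u \<epsilon> (x \<epsilon>)) \<notin> cs_nets Y"
proof
  define x where "x = xs \<circ> inv eps"
  have decreasing: "eps n < eps m" if "m < n" for m n
    using lift_Suc_mono_less[of "\<lambda>n. - eps n", OF _ that] eps(2) by simp
  have "inj eps"
  proof (rule injI)
    fix m n assume "eps m = eps n"
    then show "m = n"
      using decreasing[of m n] decreasing[of n m] by (cases m n rule: linorder_cases) auto
  qed
  then have x_eps: "x (eps n) = xs n" for n
    by (simp add: x_def)
  show "x \<in> cs_nets X"
    unfolding cs_nets_def using K xs by (intro CollectI exI[of _ K] exI[of _ 1]) (auto simp: x_def)
  show "(\<lambda>\<epsilon>. u \<epsilon> (x \<epsilon>)) \<notin> cs_nets Y"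
  proof
    assume "(\<lambda>\<epsilon>. u \<epsilon> (x \<epsilon>)) \<in> cs_nets Y"
    then obtain C e where C: "compactin Y C" "e > 0" "\<forall>\<epsilon>\<in>{0<..1}. \<epsilon> < e \<longrightarrow> u \<epsilon> (x \<epsilon>) \<in> C"
      unfolding cs_nets_def by blast
    have "\<forall>\<^sub>F n in sequentially. u (eps n) (xs n) \<in> C"
      using order_tendstoD(2)[OF eps(3) C(2)] by eventually_elim (use C(3) eps(1) x_eps in auto)
    moreover have "\<forall>\<^sub>F n in sequentially. u (eps n) (xs n) \<notin> C"
      using escape[OF C(1)] by (simp add: cofinite_eq_sequentially[symmetric] eventually_cofinite)
    ultimately have "\<forall>\<^sub>F n in sequentially. False"
      by eventually_elim blast
    then show False
      by simp
  qed
qed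

lemma not_c_bounded_witnesses:
  fixes TX :: "'a topology" and AY :: "('b set \<times> ('b \<Rightarrow> 'f::euclidean_space)) set"
    and u :: "real \<Rightarrow> 'a \<Rightarrow> 'b"
  assumes Y: "smooth_manifold TY AY"
    and u: "\<And>\<epsilon>. \<epsilon> \<in> {0<..1} \<Longrightarrow> continuous_map TX TY (u \<epsilon>)"
    and not_bounded: "\<not> c_bounded TX TY u"
  shows "\<exists>f::'b \<Rightarrow> real. smooth_fun AY f \<and> \<not> moderate0 TX (\<lambda>\<epsilon> x. f (u \<epsilon> x))"
    and "\<exists>x\<in>cs_nets TX. (\<lambda>\<epsilon>. u \<epsilon> (x \<epsilon>)) \<notin> cs_nets TY"
proof -
  obtain K where K: "compactin TX K"
    and not_bounded_on_K: "\<not> (\<exists>e>0. \<exists>L. compactin TY L \<and> (\<forall>\<epsilon>\<in>{0<..1}. \<epsilon> < e \<longrightarrow> u \<epsilon> ` K \<subseteq> L))"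
    using not_bounded unfolding c_bounded_def by blast
  have unbounded: "\<exists>\<epsilon>\<in>{0<..1}. \<epsilon> < e \<and> \<not> u \<epsilon> ` K \<subseteq> L" if "compactin TY L" "e > 0" for L e
    using not_bounded_on_K that by blast
  have into: "u \<epsilon> ` K \<subseteq> topspace TY" if "\<epsilon> \<in> {0<..1}" for \<epsilon>
    using u[OF that] compactin_subset_topspace[OF K] continuous_map_image_subset_topspace by blast
  have "paracompact_space TY"
    using Y by (simp add: smooth_manifold_def)
  from escaping_sequence[OF this smooth_manifold_locally_compact[OF Y] into unbounded]
  obtain eps xs where eps: "\<And>n. eps n \<in> {0<..1}" "\<And>n. eps (Suc n) < eps n" "eps \<longlonglongrightarrow> 0"
    and xs: "\<And>n. xs n \<in> K" and escape: "\<And>C. compactin TY C \<Longrightarrow> finite {n. u (eps n) (xs n) \<in> C}"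
    by blast
  show "\<exists>x\<in>cs_nets TX. (\<lambda>\<epsilon>. u \<epsilon> (x \<epsilon>)) \<notin> cs_nets TY"
    by (rule not_cs_nets_if_escaping[OF K xs eps escape])
  have "u (eps n) (xs n) \<in> topspace TY" for n
    using into[OF eps(1)] xs by blast
  from smooth_fun_above_escaping_sequence[OF Y this escape, where b="\<lambda>n. real n * eps n powr (- real n)"]
  obtain f :: "'b \<Rightarrow> real" where f: "smooth_fun AY f"
    and above: "\<And>n. real n * eps n powr (- real n) \<le> f (u (eps n) (xs n))"
    by blast
  have "real n * eps n powr (- real n) \<le> norm (f (u (eps n) (xs n)))" for n
    using above[of n] abs_ge_self[of "f (u (eps n) (xs n))"] by simp
  then have "\<not> moderate0 TX (\<lambda>\<epsilon> x. f (u \<epsilon> x))"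
    by (rule not_moderate0_if_blowup[OF K xs eps(1,3)])
  with f show "\<exists>f::'b \<Rightarrow> real. smooth_fun AY f \<and> \<not> moderate0 TX (\<lambda>\<epsilon> x. f (u \<epsilon> x))"
    by blast
qed

theorem proposition3p1:
  fixes TX :: "'a topology" and AX :: "('a set \<times> ('a \<Rightarrow> 'e::euclidean_space)) set"
    and TY :: "'b topology" and AY :: "('b set \<times> ('b \<Rightarrow> 'f::euclidean_space)) set"
    and u :: "real \<Rightarrow> 'a \<Rightarrow> 'b"
  assumes X: "smooth_manifold TX AX"
    and Y: "smooth_manifold TY AY"
    and u_smooth: "\<forall>\<epsilon>\<in>{0<..1}. smooth_map TX AX TY AY (u \<epsilon>)"
  shows
   "(c_bounded TX TY u
       \<longleftrightarrow> ((\<forall>f::'b \<Rightarrow> real. smooth_fun AY f \<longrightarrow> c_bounded TX euclidean (\<lambda>\<epsilon> x. f (u \<epsilon> x))) \<and>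
            (\<forall>f::'b \<Rightarrow> complex. smooth_fun AY f \<longrightarrow> c_bounded TX euclidean (\<lambda>\<epsilon> x. f (u \<epsilon> x))))) \<and>
    (c_bounded TX TY u
       \<longleftrightarrow> ((\<forall>f::'b \<Rightarrow> real. smooth_fun AY f \<longrightarrow> moderate0 TX (\<lambda>\<epsilon> x. f (u \<epsilon> x))) \<and>
            (\<forall>f::'b \<Rightarrow> complex. smooth_fun AY f \<longrightarrow> moderate0 TX (\<lambda>\<epsilon> x. f (u \<epsilon> x))))) \<and>
    (c_bounded TX TY u
       \<longleftrightarrow> (\<forall>x \<in> cs_nets TX. (\<lambda>\<epsilon>. u \<epsilon> (x \<epsilon>)) \<in> cs_nets TY))"
proof -
  have u_cont: "\<And>\<epsilon>. \<epsilon> \<in> {0<..1} \<Longrightarrow> continuous_map TX TY (u \<epsilon>)"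
    using u_smooth unfolding smooth_map_def by blast
  show ?thesis
  proof (cases "c_bounded TX TY u")
    case True
    then show ?thesis
      using c_bounded_compose[OF True smooth_fun_continuous_map[OF Y, where 'k=real]]
        c_bounded_compose[OF True smooth_fun_continuous_map[OF Y, where 'k=complex]]
        c_bounded_imp_moderate0[where 'k=real] c_bounded_imp_moderate0[where 'k=complex] c_bounded_cs_nets
      by blast
  next
    case False
    then show ?thesis
      using not_c_bounded_witnesses[OF Y u_cont False] c_bounded_imp_moderate0[where 'k=real] by blast
  qed
qed

end
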